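(* Let $P=\sum_{i=0}^Nq^iP_i(D)\in\mathbb{C}[q][D]$ with $D=q\frac{d}{dq}$ and $P_i\in\mathbb{C}[D]$. For $r\geq 0$ let $P^{(r)}=\sum_iq^iP_i^{(r)}(D)$, where $P_i^{(r)}$ is the $r$-th formal derivative of the polynomial $P_i$. Let $I=\sum_{i=0}^NI^ih^i$ with $I^i\in\mathbb{C}[[q]]$. Then $I$ is a perturbed solution of $P$ if and only if for every $0\leq s\leq N$ $$\frac{P^{(s)}(I^0)}{s!}+\frac{P^{(s-1)}(I^1)}{(s-1)!}+\cdots+P(I^s)=0.$$
   Context: Put $I_r=\sum_{m=0}^rI^{r-m}(q)\,t^m/m!\in\mathbb{C}[[q]][t]$. Operators in $\mathbb{C}[q][D]$ act on $\mathbb{C}[[q]][t]$ via $D(f(q)t^m)=qf'(q)t^m+mf(q)t^{m-1}$, with $q$ acting by multiplication. $I$ is a perturbed solution of $P$ if $PI_r=0$ for all $0\leq r\leq N$. *)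

theory Defs
  imports "HOL-Computational_Algebra.Computational_Algebra"
begin

text \<open>Elements of C[[q]][t] are modelled as complex fps poly (polynomials in t with
  coefficients in C[[q]]).  The operator D = q d/dq acts by
  D(f t^m) = q f'(q) t^m + m f t^(m-1).\<close>

definition opD :: "complex fps poly \<Rightarrow> complex fps poly" where
  "opD F = map_poly (\<lambda>f. fps_X * fps_deriv f) F + pderiv F"

definition apply_polyD :: "complex poly \<Rightarrow> complex fps poly \<Rightarrow> complex fps poly" where
  "apply_polyD p F = (\<Sum>k\<le>degree p. smult (fps_const (coeff p k)) ((opD ^^ k) F))"

definition applyP :: "(nat \<Rightarrow> complex poly) \<Rightarrow> nat \<Rightarrow> complex fps poly \<Rightarrow> complex fps poly" where
  "applyP Pc M F = (\<Sum>i\<le>M. smult (fps_X ^ i) (apply_polyD (Pc i) F))"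

definition Ir :: "(nat \<Rightarrow> complex fps) \<Rightarrow> nat \<Rightarrow> complex fps poly" where
  "Ir I r = (\<Sum>m\<le>r. monom (fps_const (1 / fact m) * I (r - m)) m)"

definition perturbed_solution ::
  "(nat \<Rightarrow> complex poly) \<Rightarrow> nat \<Rightarrow> (nat \<Rightarrow> complex fps) \<Rightarrow> nat \<Rightarrow> bool" where
  "perturbed_solution Pc M I N \<longleftrightarrow> (\<forall>r\<le>N. applyP Pc M (Ir I r) = 0)"

end

theory Submission
  imports Defs
begin

text \<open>
  On \<open>\<complex>[[q]][t]\<close> the operator \<open>D\<close> is \<open>\<theta> + \<partial>\<close>, where \<open>\<theta> = q d/dq\<close> acts on the
  coefficients and \<open>\<partial> = d/dt\<close>. The two commute, so Taylor's formula gives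
  \<open>p(D) = \<Sum>k. p^(k)(\<theta>) \<partial>^k / k!\<close>. As \<open>\<partial>^k I_s\<close> has constant term \<open>I^(s-k)\<close>, the constant
  term of \<open>P I_s\<close> is the \<open>s\<close>-th expression of the theorem. Finally \<open>P\<close> commutes with \<open>\<partial>\<close>
  and \<open>\<partial> I_(s+1) = I_s\<close>, so by induction \<open>P I_r = 0\<close> iff the constant terms of \<open>P I_s\<close>
  vanish for all \<open>s \<le> r\<close>.
\<close>

definition poly_op ::
  "('a::comm_ring_1 fps poly \<Rightarrow> 'a fps poly) \<Rightarrow> 'a poly \<Rightarrow> 'a fps poly \<Rightarrow> 'a fps poly" where
  "poly_op A p F = (\<Sum>k\<le>degree p. smult (fps_const (coeff p k)) ((A ^^ k) F))"

definition linear_op :: "('a::comm_ring_1 fps poly \<Rightarrow> 'a fps poly) \<Rightarrow> bool" where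
  "linear_op A \<longleftrightarrow> (\<forall>F G. A (F + G) = A F + A G) \<and>
     (\<forall>c F. A (smult (fps_const c) F) = smult (fps_const c) (A F))"

lemma linear_op_add: "linear_op A \<Longrightarrow> A (F + G) = A F + A G"
  by (simp add: linear_op_def)

lemma linear_op_smult: "linear_op A \<Longrightarrow> A (smult (fps_const c) F) = smult (fps_const c) (A F)"
  by (simp add: linear_op_def)

lemma linear_op_zero: "linear_op A \<Longrightarrow> A 0 = 0"
  using linear_op_add[of A 0 0] by simp

lemma linear_op_sum: "linear_op A \<Longrightarrow> A (sum f S) = (\<Sum>x\<in>S. A (f x))"
  by (induction S rule: infinite_finite_induct) (simp_all add: linear_op_zero linear_op_add)

lemma linear_op_funpow: "linear_op A \<Longrightarrow> linear_op (A ^^ k)"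
  by (induction k) (simp_all add: linear_op_def)

lemma linear_op_pderiv: "linear_op pderiv"
  by (simp add: linear_op_def pderiv_add pderiv_smult)

lemma linear_op_add_op: "linear_op A \<Longrightarrow> linear_op B \<Longrightarrow> linear_op (\<lambda>F. A F + B F)"
  by (simp add: linear_op_def smult_add_right algebra_simps)

lemma linear_op_map_poly:
  assumes "\<And>f g. h (f + g) = h f + h g" "\<And>c f. h (fps_const c * f) = fps_const c * h f"
  shows "linear_op (map_poly h)"
proof -
  have "h 0 = 0" using assms(1)[of 0 0] by simp
  then show ?thesis
    unfolding linear_op_def by (auto intro!: poly_eqI simp: coeff_map_poly assms)
qed

lemma smult_sum_right: "smult c (sum f S) = (\<Sum>x\<in>S. smult c (f x))"
  by (induction S rule: infinite_finite_induct) (simp_all add: smult_add_right)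

lemma poly_op_conv_sum:
  "degree p \<le> K \<Longrightarrow> poly_op A p F = (\<Sum>k\<le>K. smult (fps_const (coeff p k)) ((A ^^ k) F))"
  unfolding poly_op_def by (rule sum.mono_neutral_left) (auto simp: coeff_eq_0)

lemma poly_op_0 [simp]: "poly_op A 0 F = 0"
  by (simp add: poly_op_def)

lemma poly_op_zero_right: "linear_op A \<Longrightarrow> poly_op A p 0 = 0"
  by (simp add: poly_op_def linear_op_zero[OF linear_op_funpow])

lemma poly_op_add: "poly_op A (p + q) F = poly_op A p F + poly_op A q F"
proof -
  let ?K = "max (degree p) (degree q)"
  have "degree (p + q) \<le> ?K" by (rule degree_add_le) auto
  then show ?thesis
    by (simp add: poly_op_conv_sum[of _ ?K] sum.distrib smult_add_left
        flip: fps_const_add)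
qed

lemma poly_op_smult: "poly_op A (smult c p) F = smult (fps_const c) (poly_op A p F)"
  using poly_op_conv_sum[of "smult c p" "degree p"]
  by (simp add: poly_op_def smult_sum_right degree_smult_le flip: fps_const_mult)

lemma poly_op_pCons:
  assumes "linear_op A"
  shows "poly_op A (pCons a p) F = smult (fps_const a) F + A (poly_op A p F)"
proof -
  have "poly_op A (pCons a p) F =
      (\<Sum>k\<le>Suc (degree p). smult (fps_const (coeff (pCons a p) k)) ((A ^^ k) F))"
    by (rule poly_op_conv_sum) (simp add: degree_pCons_le)
  also have "\<dots> = smult (fps_const a) F +
      (\<Sum>k\<le>degree p. smult (fps_const (coeff p k)) (A ((A ^^ k) F)))"
    by (subst sum.atMost_Suc_shift) simp
  also have "\<dots> = smult (fps_const a) F + A (poly_op A p F)"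
    by (simp add: poly_op_def linear_op_sum[OF assms] linear_op_smult[OF assms])
  finally show ?thesis .
qed

lemma funpow_commute:
  assumes "\<And>x. f (g x) = g (f x)"
  shows "(f ^^ n) (g x) = g ((f ^^ n) x)"
  by (induction n) (simp_all add: assms)

lemma poly_op_commute:
  assumes "linear_op B" "\<And>G. A (B G) = B (A G)"
  shows "poly_op A p (B F) = B (poly_op A p F)"
  by (simp add: poly_op_def linear_op_sum[OF assms(1)] linear_op_smult[OF assms(1)]
      funpow_commute[of A B, OF assms(2)])

lemma higher_pderiv_pCons:
  "(pderiv ^^ Suc k) (pCons a p) =
     smult (of_nat (Suc k)) ((pderiv ^^ k) p) + pCons 0 ((pderiv ^^ Suc k) p)"
proof (induction k)
  case 0
  then show ?case by (simp add: pderiv_pCons)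
next
  case (Suc k)
  have "(pderiv ^^ Suc (Suc k)) (pCons a p) = pderiv ((pderiv ^^ Suc k) (pCons a p))"
    by simp
  also have "\<dots> = smult (of_nat (Suc k)) ((pderiv ^^ Suc k) p) + (pderiv ^^ Suc k) p +
      pCons 0 ((pderiv ^^ Suc (Suc k)) p)"
    by (simp only: Suc pderiv_add pderiv_smult pderiv_pCons) (simp add: algebra_simps)
  finally show ?case by (simp add: algebra_simps smult_add_left)
qed

locale pderiv_commuting_op =
  fixes A :: "'a::field_char_0 fps poly \<Rightarrow> 'a fps poly"
  assumes linear: "linear_op A"
    and pderiv_commute: "\<And>G. A (pderiv G) = pderiv (A G)"
begin

definition taylor_term :: "nat \<Rightarrow> 'a poly \<Rightarrow> 'a fps poly \<Rightarrow> 'a fps poly" where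
  "taylor_term k p F =
     smult (fps_const (1 / fact k)) (poly_op A ((pderiv ^^ k) p) ((pderiv ^^ k) F))"

lemma taylor_term_0_pCons:
  "taylor_term 0 (pCons a p) F = smult (fps_const a) F + A (taylor_term 0 p F)"
  by (simp add: taylor_term_def poly_op_pCons[OF linear])

lemma taylor_term_Suc_pCons:
  "taylor_term (Suc k) (pCons a p) F = pderiv (taylor_term k p F) + A (taylor_term (Suc k) p F)"
proof -
  let ?G = "(pderiv ^^ Suc k) F"
  have fact_Suc:
    "fps_const (1 / fact (Suc k)) * fps_const (of_nat (Suc k)) = fps_const (1 / fact k :: 'a)"
    by (simp add: field_simps del: of_nat_Suc)
  have "taylor_term (Suc k) (pCons a p) F = smult (fps_const (1 / fact (Suc k)))
      (smult (fps_const (of_nat (Suc k))) (poly_op A ((pderiv ^^ k) p) ?G) +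
       A (poly_op A ((pderiv ^^ Suc k) p) ?G))"
    unfolding taylor_term_def higher_pderiv_pCons
    by (simp only: poly_op_add poly_op_smult poly_op_pCons[OF linear]) simp
  also have "\<dots> = smult (fps_const (1 / fact k)) (poly_op A ((pderiv ^^ k) p) ?G) +
      A (taylor_term (Suc k) p F)"
    by (simp only: smult_add_right smult_smult fact_Suc taylor_term_def linear_op_smult[OF linear])
  also have "\<dots> = pderiv (taylor_term k p F) + A (taylor_term (Suc k) p F)"
    by (simp add: taylor_term_def pderiv_smult
        poly_op_commute[where A = A and B = pderiv, OF linear_op_pderiv pderiv_commute])
  finally show ?thesis .
qed

lemma poly_op_shift_taylor:
  "degree p \<le> K \<Longrightarrow> poly_op (\<lambda>G. A G + pderiv G) p F = (\<Sum>k\<le>K. taylor_term k p F)"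
proof (induction p arbitrary: K F)
  case 0
  then show ?case by (simp add: taylor_term_def)
next
  case (pCons a p)
  let ?D = "\<lambda>G. A G + pderiv G"
  have linear_D: "linear_op ?D"
    by (rule linear_op_add_op[OF linear linear_op_pderiv])
  show ?case
  proof (cases "p = 0")
    case True
    have "taylor_term (Suc k) (pCons a p) F = 0" for k
      using True by (simp add: taylor_term_def higher_pderiv_pCons del: funpow.simps)
    then have "(\<Sum>k\<le>K. taylor_term k (pCons a p) F) = taylor_term 0 (pCons a p) F"
      by (cases K) (simp_all del: sum.atMost_Suc add: sum.atMost_Suc_shift)
    with True show ?thesis
      by (simp add: taylor_term_0_pCons poly_op_pCons[OF linear_D] poly_op_pCons[OF linear]
          taylor_term_def linear_op_zero[OF linear] linear_op_zero[OF linear_op_pderiv])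
  next
    case False
    with pCons.prems obtain K' where K: "K = Suc K'" "degree p \<le> K'"
      by (cases K) auto
    have "poly_op ?D (pCons a p) F =
        smult (fps_const a) F + A (poly_op ?D p F) + pderiv (poly_op ?D p F)"
      by (simp add: poly_op_pCons[OF linear_D] add.assoc)
    also have "\<dots> = smult (fps_const a) F + A (\<Sum>k\<le>Suc K'. taylor_term k p F) +
        pderiv (\<Sum>k\<le>K'. taylor_term k p F)"
      using pCons.IH[of "Suc K'" F] pCons.IH[of K' F] K by simp
    also have "\<dots> = taylor_term 0 (pCons a p) F + (\<Sum>k\<le>K'. taylor_term (Suc k) (pCons a p) F)"
      by (simp del: sum.atMost_Suc add: sum.atMost_Suc_shift linear_op_sum[OF linear]
          linear_op_sum[OF linear_op_pderiv] linear_op_add[OF linear] taylor_term_0_pCons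
          taylor_term_Suc_pCons sum.distrib algebra_simps)
    also have "\<dots> = (\<Sum>k\<le>K. taylor_term k (pCons a p) F)"
      by (simp del: sum.atMost_Suc add: K sum.atMost_Suc_shift)
    finally show ?thesis .
  qed
qed

lemma poly_op_shift_taylor_degree:
  assumes "degree F \<le> r"
  shows "poly_op (\<lambda>G. A G + pderiv G) p F = (\<Sum>k\<le>r. taylor_term k p F)"
proof -
  have "poly_op (\<lambda>G. A G + pderiv G) p F = (\<Sum>k\<le>max (degree p) r. taylor_term k p F)"
    by (rule poly_op_shift_taylor) simp
  also have "\<dots> = (\<Sum>k\<le>r. taylor_term k p F)"
  proof (rule sum.mono_neutral_right)
    have "(pderiv ^^ k) F = 0" if "r < k" for k
      using assms that by (intro poly_eqI) (simp add: coeff_higher_pderiv coeff_eq_0)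
    then show "\<forall>k\<in>{..max (degree p) r} - {..r}. taylor_term k p F = 0"
      by (auto simp: taylor_term_def poly_op_zero_right[OF linear])
  qed auto
  finally show ?thesis .
qed

end

definition fps_euler :: "'a::comm_ring_1 fps \<Rightarrow> 'a fps" where
  "fps_euler f = fps_X * fps_deriv f"

lemma fps_euler_0 [simp]: "fps_euler 0 = 0"
  by (simp add: fps_euler_def)

lemma map_poly_fps_euler_pderiv:
  "map_poly fps_euler (pderiv F) = pderiv (map_poly fps_euler F)"
  by (auto intro!: poly_eqI simp: fps_euler_def coeff_map_poly coeff_pderiv algebra_simps
      simp flip: fps_of_nat)

interpretation euler: pderiv_commuting_op "map_poly fps_euler :: 'a::field_char_0 fps poly \<Rightarrow> _"
  by unfold_locales
    (simp_all add: linear_op_map_poly fps_euler_def algebra_simps map_poly_fps_euler_pderiv)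

lemma opD_eq_euler_shift: "opD = (\<lambda>F. map_poly fps_euler F + pderiv F)"
  unfolding opD_def fps_euler_def [abs_def] ..

definition poly_op_fps :: "('a::comm_ring_1 fps \<Rightarrow> 'a fps) \<Rightarrow> 'a poly \<Rightarrow> 'a fps \<Rightarrow> 'a fps" where
  "poly_op_fps g p f = (\<Sum>k\<le>degree p. fps_const (coeff p k) * (g ^^ k) f)"

lemma coeff_funpow_map_poly:
  fixes g :: "'a::zero \<Rightarrow> 'a"
  assumes "g 0 = 0"
  shows "coeff ((map_poly g ^^ k) G) n = (g ^^ k) (coeff G n)"
  using assms by (induction k) (simp_all add: coeff_map_poly)

lemma coeff_poly_op_map_poly:
  "g 0 = 0 \<Longrightarrow> coeff (poly_op (map_poly g) p G) n = poly_op_fps g p (coeff G n)"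
  by (simp add: poly_op_def poly_op_fps_def coeff_sum coeff_funpow_map_poly)

lemma funpow_opD_const: "(opD ^^ k) [:f:] = [:(fps_euler ^^ k) f:]"
  by (induction k) (simp_all add: opD_eq_euler_shift map_poly_pCons)

lemma sum_const_poly: "(\<Sum>x\<in>S. [:g x:]) = [:\<Sum>x\<in>S. g x:]"
  by (induction S rule: infinite_finite_induct) simp_all

lemma applyP_conv_poly_op:
  "applyP Pc M F = (\<Sum>i\<le>M. smult (fps_X ^ i) (poly_op opD (Pc i) F))"
  by (simp add: applyP_def apply_polyD_def poly_op_def)

lemma applyP_const:
  "applyP Pc M [:f:] = [:\<Sum>i\<le>M. fps_X ^ i * poly_op_fps fps_euler (Pc i) f:]"
  by (simp add: applyP_conv_poly_op poly_op_def poly_op_fps_def funpow_opD_const sum_const_poly)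

lemma linear_op_opD: "linear_op opD"
  unfolding opD_eq_euler_shift by (rule linear_op_add_op[OF euler.linear linear_op_pderiv])

lemma applyP_0: "applyP Pc M 0 = 0"
  by (simp add: applyP_conv_poly_op poly_op_zero_right[OF linear_op_opD])

lemma pderiv_applyP: "pderiv (applyP Pc M F) = applyP Pc M (pderiv F)"
proof -
  have "opD (pderiv G) = pderiv (opD G)" for G
    by (simp add: opD_eq_euler_shift map_poly_fps_euler_pderiv pderiv_add)
  then show ?thesis
    by (simp add: applyP_conv_poly_op linear_op_sum[OF linear_op_pderiv] pderiv_smult
        poly_op_commute[where A = opD and B = pderiv, OF linear_op_pderiv])
qed

lemma degree_Ir: "degree (Ir I r) \<le> r"
  unfolding Ir_def by (rule degree_sum_le) (auto intro: order.trans[OF degree_monom_le])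

lemma coeff_Ir: "coeff (Ir I r) k = (if k \<le> r then fps_const (1 / fact k) * I (r - k) else 0)"
  by (simp add: Ir_def coeff_sum coeff_monom)

lemma fps_const_fact: "fps_const (fact n) = fact n"
  by (metis fps_of_nat of_nat_fact)

lemma coeff_0_higher_pderiv_Ir:
  assumes "k \<le> r"
  shows "coeff ((pderiv ^^ k) (Ir I r)) 0 = I (r - k)"
proof -
  have "coeff ((pderiv ^^ k) (Ir I r)) 0 = fact k * (fps_const (1 / fact k) * I (r - k))"
    by (simp add: coeff_higher_pderiv coeff_Ir assms flip: pochhammer_fact)
  then show ?thesis
    by (simp add: mult.assoc[symmetric] flip: fps_const_mult fps_const_fact)
qed

lemma pderiv_Ir_Suc: "pderiv (Ir I (Suc r)) = Ir I r"
proof (rule poly_eqI)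
  fix n
  have "fps_const (of_nat (Suc n)) * fps_const (1 / (of_nat (Suc n) * fact n)) =
      fps_const (1 / fact n :: complex)"
    by (simp add: field_simps del: of_nat_Suc)
  then show "coeff (pderiv (Ir I (Suc r))) n = coeff (Ir I r) n"
    by (simp add: coeff_pderiv coeff_Ir mult.assoc[symmetric] fps_of_nat del: of_nat_Suc)
qed

lemma pderiv_Ir_0: "pderiv (Ir I 0) = 0"
  using degree_Ir[of I 0] by (simp add: pderiv_eq_0_iff)

lemma coeff_0_applyP_Ir:
  "coeff (applyP Pc M (Ir I r)) 0 = (\<Sum>i\<le>M. fps_X ^ i *
     (\<Sum>k\<le>r. fps_const (1 / fact k) * poly_op_fps fps_euler ((pderiv ^^ k) (Pc i)) (I (r - k))))"
  by (simp add: applyP_conv_poly_op opD_eq_euler_shift coeff_sum coeff_poly_op_map_poly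
      euler.poly_op_shift_taylor_degree[OF degree_Ir] euler.taylor_term_def coeff_0_higher_pderiv_Ir)

lemma sum_applyP_higher_pderiv_eq_coeff_0:
  "(\<Sum>j\<le>s. smult (fps_const (1 / fact (s - j)))
      (applyP (\<lambda>i. (pderiv ^^ (s - j)) (Pc i)) M [:I j:])) = [:coeff (applyP Pc M (Ir I s)) 0:]"
proof -
  let ?t = "\<lambda>k j. \<Sum>i\<le>M. fps_const (1 / fact k) *
    (fps_X ^ i * poly_op_fps fps_euler ((pderiv ^^ k) (Pc i)) (I j))"
  have "(\<Sum>j\<le>s. smult (fps_const (1 / fact (s - j)))
      (applyP (\<lambda>i. (pderiv ^^ (s - j)) (Pc i)) M [:I j:])) = [:\<Sum>j\<le>s. ?t (s - j) j:]"
    by (simp add: applyP_const sum_const_poly sum_distrib_left)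
  also have "(\<Sum>j\<le>s. ?t (s - j) j) = (\<Sum>k\<le>s. ?t k (s - k))"
    by (rule sum.reindex_bij_witness[where i = "\<lambda>k. s - k" and j = "\<lambda>j. s - j"]) auto
  also have "\<dots> = coeff (applyP Pc M (Ir I s)) 0"
    unfolding coeff_0_applyP_Ir sum_distrib_left by (subst sum.swap) (simp add: mult_ac)
  finally show ?thesis .
qed

lemma poly_eq_0_iff_pderiv_coeff_0:
  "p = 0 \<longleftrightarrow> pderiv p = 0 \<and> coeff p 0 = 0"
  for p :: "'a::{idom,semiring_char_0} poly"
  by (metis coeff_pCons_0 degree_eq_zeroE pCons_0_0 pderiv_0 pderiv_eq_0_iff)

lemma applyP_Ir_eq_0_iff:
  "applyP Pc M (Ir I r) = 0 \<longleftrightarrow> (\<forall>s\<le>r. coeff (applyP Pc M (Ir I s)) 0 = 0)"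
proof (induction r)
  case 0
  then show ?case
    by (subst poly_eq_0_iff_pderiv_coeff_0) (simp add: pderiv_applyP pderiv_Ir_0 applyP_0)
next
  case (Suc r)
  then show ?case
    by (subst poly_eq_0_iff_pderiv_coeff_0) (auto simp: pderiv_applyP pderiv_Ir_Suc le_Suc_eq)
qed

theorem theorem4p1:
  fixes Pc :: "nat \<Rightarrow> complex poly" and M N :: nat and I :: "nat \<Rightarrow> complex fps"
  shows "perturbed_solution Pc M I N \<longleftrightarrow>
    (\<forall>s\<le>N. (\<Sum>j\<le>s. smult (fps_const (1 / fact (s - j)))
                (applyP (\<lambda>i. (pderiv ^^ (s - j)) (Pc i)) M [:I j:])) = 0)"
proof -
  have "perturbed_solution Pc M I N \<longleftrightarrow> (\<forall>r\<le>N. \<forall>s\<le>r. coeff (applyP Pc M (Ir I s)) 0 = 0)"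
    by (simp add: perturbed_solution_def applyP_Ir_eq_0_iff)
  also have "\<dots> \<longleftrightarrow> (\<forall>s\<le>N. coeff (applyP Pc M (Ir I s)) 0 = 0)"
    by (meson order.trans order.refl)
  finally show ?thesis
    by (simp add: sum_applyP_higher_pderiv_eq_coeff_0)
qed

end
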